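(* For integers $r_1\le s_1<0$ and $r_2\le s_2<0$, $\mathfrak n(V_{r_1s_1},V_{r_2s_2})=0$ if and only if $s_2<s_1$ or $r_2<r_1$; and $\mathfrak n(V_{rs},V_{rs})=\mathbb K\,\mathrm{Id}$.
   Context: $V_{rs}=\bigoplus_{i=r}^sE_i$ with $\dim E_i=1$ in degree $i$, and $\delta_{rs}$ maps $E_i$ onto $E_{i-1}$ ($r<i\le s$) and $E_r$ to $0$. Each $V_{rs}$ is made an irreducible $\mathfrak{sl}_2$-module via an $\mathfrak{sl}_2$-triple $(\delta_{rs},H,Y)$ in $\mathfrak{gl}(V_{rs})$ with $H$ of degree $0$, $Y$ of degree $1$, $[H,\delta_{rs}]=2\delta_{rs}$, $[H,Y]=-2Y$, $[\delta_{rs},Y]=H$. $\operatorname{Hom}(V_{r_1s_1},V_{r_2s_2})$ carries the induced $\mathfrak{sl}_2$-module structure and grading (degree $k$ maps send $E_i$ to $E_{i+k}$); $\mathfrak n(V_{r_1s_1},V_{r_2s_2})$ is its maximal $\mathfrak{sl}_2$-submodule contained in the sum of components of nonnegative degree. *)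

theory Defs
  imports "Jordan_Normal_Form.Matrix"
begin

text \<open>The graded space V_{rs} = E_r + ... + E_s is modelled by matrices: the basis vector
  with index p (0 <= p < dimV r s) spans E_{r+p}.  Linear maps V_{r1 s1} -> V_{r2 s2}
  are dimV r2 s2 x dimV r1 s1 matrices; entry (p,q) maps E_{r1+q} to E_{r2+p} and has
  degree (r2+p) - (r1+q).\<close>

definition dimV :: "int \<Rightarrow> int \<Rightarrow> nat" where
  "dimV r s = nat (s - r + 1)"

text \<open>delta_{rs}: maps E_i onto E_{i-1} (basis chosen so that the entries are 1), E_r to 0.\<close>
definition delta_mat :: "int \<Rightarrow> int \<Rightarrow> 'a::field mat" where
  "delta_mat r s = mat (dimV r s) (dimV r s) (\<lambda>(p, q). if q = p + 1 then 1 else 0)"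

text \<open>(delta_{rs}, H, Y) is an sl2-triple with H of degree 0 and Y of degree 1.\<close>
definition graded_sl2_triple :: "int \<Rightarrow> int \<Rightarrow> 'a::field mat \<Rightarrow> 'a mat \<Rightarrow> bool" where
  "graded_sl2_triple r s H Y \<longleftrightarrow>
     H \<in> carrier_mat (dimV r s) (dimV r s) \<and> Y \<in> carrier_mat (dimV r s) (dimV r s) \<and>
     (\<forall>p q. p < dimV r s \<longrightarrow> q < dimV r s \<longrightarrow> p \<noteq> q \<longrightarrow> H $$ (p, q) = 0) \<and>
     (\<forall>p q. p < dimV r s \<longrightarrow> q < dimV r s \<longrightarrow> p \<noteq> q + 1 \<longrightarrow> Y $$ (p, q) = 0) \<and>
     H * delta_mat r s - delta_mat r s * H = 2 \<cdot>\<^sub>m delta_mat r s \<and>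
     H * Y - Y * H = (- 2) \<cdot>\<^sub>m Y \<and>
     delta_mat r s * Y - Y * delta_mat r s = H"

definition hom_act :: "'a::field mat \<Rightarrow> 'a mat \<Rightarrow> 'a mat \<Rightarrow> 'a mat" where
  "hom_act X1 X2 \<phi> = X2 * \<phi> - \<phi> * X1"

definition hom_sl2_submodule ::
  "int \<Rightarrow> int \<Rightarrow> 'a::field mat \<Rightarrow> 'a mat \<Rightarrow> int \<Rightarrow> int \<Rightarrow> 'a mat \<Rightarrow> 'a mat \<Rightarrow> 'a mat set \<Rightarrow> bool" where
  "hom_sl2_submodule r1 s1 H1 Y1 r2 s2 H2 Y2 S \<longleftrightarrow>
     S \<subseteq> carrier_mat (dimV r2 s2) (dimV r1 s1) \<and>
     0\<^sub>m (dimV r2 s2) (dimV r1 s1) \<in> S \<and>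
     (\<forall>\<phi>\<in>S. \<forall>\<psi>\<in>S. \<phi> + \<psi> \<in> S) \<and>
     (\<forall>c. \<forall>\<phi>\<in>S. c \<cdot>\<^sub>m \<phi> \<in> S) \<and>
     (\<forall>\<phi>\<in>S. hom_act (delta_mat r1 s1) (delta_mat r2 s2) \<phi> \<in> S) \<and>
     (\<forall>\<phi>\<in>S. hom_act H1 H2 \<phi> \<in> S) \<and>
     (\<forall>\<phi>\<in>S. hom_act Y1 Y2 \<phi> \<in> S)"

definition nonneg_degree :: "int \<Rightarrow> int \<Rightarrow> int \<Rightarrow> int \<Rightarrow> 'a::field mat \<Rightarrow> bool" where
  "nonneg_degree r1 s1 r2 s2 \<phi> \<longleftrightarrow>
     (\<forall>p q. p < dimV r2 s2 \<longrightarrow> q < dimV r1 s1 \<longrightarrow>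
        (r2 + int p) - (r1 + int q) < 0 \<longrightarrow> \<phi> $$ (p, q) = 0)"

text \<open>n(V1,V2): the maximal sl2-submodule contained in the nonnegative-degree part,
  i.e. the union (= sum) of all such submodules.\<close>
definition n_max ::
  "int \<Rightarrow> int \<Rightarrow> 'a::field mat \<Rightarrow> 'a mat \<Rightarrow> int \<Rightarrow> int \<Rightarrow> 'a mat \<Rightarrow> 'a mat \<Rightarrow> 'a mat set" where
  "n_max r1 s1 H1 Y1 r2 s2 H2 Y2 =
     \<Union> {S. hom_sl2_submodule r1 s1 H1 Y1 r2 s2 H2 Y2 S \<and>
            (\<forall>\<phi>\<in>S. nonneg_degree r1 s1 r2 s2 \<phi>)}"

end

theory Submission
  imports Defs
begin

text \<open>
  Linear maps V(r1,s1) -> V(r2,s2) are (dimV r2 s2) x (dimV r1 s1)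
  matrices, and the raising operator of the induced sl2-action is
  E(A) = delta2 A - A delta1, i.e. E(A)(p,q) = A(p+1,q) - A(p,q-1).
  (1) E is nilpotent, so every nonzero E-stable set of matrices contains a nonzero
      matrix killed by E (a highest weight vector).
  (2) A matrix killed by E is constant along diagonals and supported on the diagonals
      p - q <= min 0 (n2 - n1).  Together with the nonnegative degree condition
      p - q >= r1 - r2 this forces it to vanish when s2 < s1 or r2 < r1, and to be
      scalar when V1 = V2.
  (3) Conversely, if s1 <= s2 and r1 <= r2, the matrix psi with ones on the diagonal
      p - q = min 0 (n2 - n1) is a highest weight vector of nonnegative degree.  By the
      sl2 commutation relations the span of the Y-iterates of psi is a submodule, and Y,
      being of degree 1, preserves nonnegative degree; so psi lies in n(V1,V2).
  (4) For V1 = V2 the scalars form a submodule of nonnegative degree.  An element of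
      n(V,V) not killed by E would produce a nonzero scalar matrix in the image of E,
      but the image of E consists of trace-zero matrices.
\<close>

lemma mult_entry:
  assumes "A \<in> carrier_mat n m" "B \<in> carrier_mat m k" "i < n" "j < k"
  shows "(A * B) $$ (i,j) = (\<Sum>l<m. A $$ (i,l) * B $$ (l,j))"
  using assms by (auto simp: scalar_prod_def lessThan_atLeast0 intro!: sum.cong)

lemma sum_single:
  fixes n k :: nat
  assumes "\<And>j. j < n \<Longrightarrow> j \<noteq> k \<Longrightarrow> f j = 0"
  shows "(\<Sum>j<n. f j) = (if k < n then f k else (0::'a::comm_monoid_add))"
proof -
  have "(\<Sum>j<n. f j) = (\<Sum>j<n. if j = k then f k else 0)"
    using assms by (intro sum.cong) auto
  then show ?thesis by (simp add: sum.delta)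
qed

lemma diag_left:
  assumes "H \<in> carrier_mat n n" "\<And>p q. p < n \<Longrightarrow> q < n \<Longrightarrow> p \<noteq> q \<Longrightarrow> H $$ (p,q) = 0"
    "A \<in> carrier_mat n m" "p < n" "q < m"
  shows "(H * A) $$ (p,q) = H $$ (p,p) * A $$ (p,q)"
  using assms by (subst mult_entry[OF assms(1,3,4,5)], subst sum_single[where k=p]) auto

lemma diag_right:
  assumes "H \<in> carrier_mat m m" "\<And>p q. p < m \<Longrightarrow> q < m \<Longrightarrow> p \<noteq> q \<Longrightarrow> H $$ (p,q) = 0"
    "A \<in> carrier_mat n m" "p < n" "q < m"
  shows "(A * H) $$ (p,q) = A $$ (p,q) * H $$ (q,q)"
  using assms by (subst mult_entry[OF assms(3,1,4,5)], subst sum_single[where k=q]) auto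

lemma delta_carrier[simp]: "delta_mat r s \<in> carrier_mat (dimV r s) (dimV r s)"
  by (simp add: delta_mat_def)

lemma delta_dims[simp]: "dim_row (delta_mat r s) = dimV r s" "dim_col (delta_mat r s) = dimV r s"
  by (simp_all add: delta_mat_def)

lemma delta_index:
  "p < dimV r s \<Longrightarrow> q < dimV r s \<Longrightarrow> delta_mat r s $$ (p,q) = (if q = p + 1 then 1 else 0)"
  by (simp add: delta_mat_def)

lemma delta_left:
  assumes "A \<in> carrier_mat (dimV r s) m" "p < dimV r s" "q < m"
  shows "(delta_mat r s * A) $$ (p,q) = (if p + 1 < dimV r s then A $$ (p+1,q) else 0)"
  using assms
  by (subst mult_entry[OF delta_carrier assms], subst sum_single[where k="p+1"]) (auto simp: delta_index)

lemma delta_right: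
  assumes "A \<in> carrier_mat m (dimV r s)" "p < m" "q < dimV r s"
  shows "(A * delta_mat r s) $$ (p,q) = (if q \<ge> 1 then A $$ (p,q-1) else 0)"
  using assms
  by (subst mult_entry[OF assms(1) delta_carrier assms(2,3)], subst sum_single[where k="q-1"])
     (auto simp: delta_index)

lemma dimV_int: "r \<le> s \<Longrightarrow> int (dimV r s) = s - r + 1"
  by (simp add: dimV_def)

lemma dimV_pos: "r \<le> s \<Longrightarrow> 0 < dimV r s"
  by (simp add: dimV_def)

lemma funpow_closed: "a \<in> S \<Longrightarrow> \<forall>b\<in>S. f b \<in> S \<Longrightarrow> (f ^^ j) a \<in> S"
  by (induction j) auto

section \<open>The induced action on matrices\<close>

definition linear_on_mat :: "nat \<Rightarrow> nat \<Rightarrow> ('a::field mat \<Rightarrow> 'a mat) \<Rightarrow> bool" where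
  "linear_on_mat n m f \<longleftrightarrow>
     (\<forall>A\<in>carrier_mat n m. f A \<in> carrier_mat n m) \<and>
     (\<forall>A\<in>carrier_mat n m. \<forall>B\<in>carrier_mat n m. f (A + B) = f A + f B) \<and>
     (\<forall>c. \<forall>A\<in>carrier_mat n m. f (c \<cdot>\<^sub>m A) = c \<cdot>\<^sub>m f A)"

lemma linear_on_matD:
  assumes "linear_on_mat n m f" "A \<in> carrier_mat n m"
  shows "f A \<in> carrier_mat n m" "B \<in> carrier_mat n m \<Longrightarrow> f (A + B) = f A + f B"
    "f (c \<cdot>\<^sub>m A) = c \<cdot>\<^sub>m f A"
  using assms unfolding linear_on_mat_def by blast+

lemma linear_on_mat_zero:
  fixes f :: "'a::field mat \<Rightarrow> 'a mat"
  assumes "linear_on_mat n m f"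
  shows "f (0\<^sub>m n m) = 0\<^sub>m n m"
proof -
  have z: "0\<^sub>m n m \<in> carrier_mat n m" by simp
  have "0\<^sub>m n m = (0::'a) \<cdot>\<^sub>m 0\<^sub>m n m" by (intro eq_matI) auto
  then have "f (0\<^sub>m n m) = f (0 \<cdot>\<^sub>m 0\<^sub>m n m)" by simp
  also have "\<dots> = 0 \<cdot>\<^sub>m f (0\<^sub>m n m)" using linear_on_matD(3)[OF assms z] .
  also have "\<dots> = 0\<^sub>m n m" using linear_on_matD(1)[OF assms z] by (intro eq_matI) auto
  finally show ?thesis .
qed

lemma linear_on_mat_iterate:
  assumes "linear_on_mat n m f" "A \<in> carrier_mat n m"
  shows "(f ^^ k) A \<in> carrier_mat n m"
  by (induction k) (simp_all add: assms(2) linear_on_matD(1)[OF assms(1)])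

lemma hom_act_linear:
  fixes X1 X2 :: "'a::field mat"
  assumes X1: "X1 \<in> carrier_mat n1 n1" and X2: "X2 \<in> carrier_mat n2 n2"
  shows "linear_on_mat n2 n1 (hom_act X1 X2)"
  unfolding linear_on_mat_def
proof (intro conjI ballI allI)
  fix A :: "'a mat" assume A: "A \<in> carrier_mat n2 n1"
  show "hom_act X1 X2 A \<in> carrier_mat n2 n1" using X1 X2 A unfolding hom_act_def by auto
  show "hom_act X1 X2 (c \<cdot>\<^sub>m A) = c \<cdot>\<^sub>m hom_act X1 X2 A" for c
    unfolding hom_act_def using X1 X2 A
    by (simp add: mult_smult_distrib[OF X2 A] mult_smult_assoc_mat[OF A X1])
       (intro eq_matI, auto simp: algebra_simps)
  fix B :: "'a mat" assume B: "B \<in> carrier_mat n2 n1"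
  show "hom_act X1 X2 (A + B) = hom_act X1 X2 A + hom_act X1 X2 B"
    unfolding hom_act_def using X1 X2 A B
    by (simp add: mult_add_distrib_mat[OF X2 A B] add_mult_distrib_mat[OF A B X1])
       (intro eq_matI, auto)
qed

lemma hom_act_comm:
  fixes A1 :: "'a::field mat"
  assumes a1: "A1 \<in> carrier_mat n1 n1" and a2: "A2 \<in> carrier_mat n2 n2"
    and b1: "B1 \<in> carrier_mat n1 n1" and b2: "B2 \<in> carrier_mat n2 n2"
    and p: "P \<in> carrier_mat n2 n1"
  shows "hom_act A1 A2 (hom_act B1 B2 P) - hom_act B1 B2 (hom_act A1 A2 P)
     = hom_act (A1 * B1 - B1 * A1) (A2 * B2 - B2 * A2) P"
proof -
  have c: "B2 * P \<in> carrier_mat n2 n1" "P * B1 \<in> carrier_mat n2 n1"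
     "A2 * P \<in> carrier_mat n2 n1" "P * A1 \<in> carrier_mat n2 n1"
     "A2 * B2 \<in> carrier_mat n2 n2" "B2 * A2 \<in> carrier_mat n2 n2"
     "A1 * B1 \<in> carrier_mat n1 n1" "B1 * A1 \<in> carrier_mat n1 n1"
    using assms by auto
  have assoc: "A2 * (B2 * P) = A2 * B2 * P" "B2 * (A2 * P) = B2 * A2 * P"
     "A2 * (P * B1) = A2 * P * B1" "B2 * (P * A1) = B2 * P * A1"
     "P * B1 * A1 = P * (B1 * A1)" "P * A1 * B1 = P * (A1 * B1)"
    using assms by (auto intro!: assoc_mult_mat[symmetric] assoc_mult_mat)
  show ?thesis
    unfolding hom_act_def
    apply (subst mult_minus_distrib_mat[OF a2 c(1,2)], subst minus_mult_distrib_mat[OF c(1,2) a1])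
    apply (subst mult_minus_distrib_mat[OF b2 c(3,4)], subst minus_mult_distrib_mat[OF c(3,4) b1])
    apply (subst minus_mult_distrib_mat[OF c(5,6) p], subst mult_minus_distrib_mat[OF p c(7,8)])
    apply (simp only: assoc)
    apply (intro eq_matI)
    using assms by (auto simp del: index_mult_mat simp: index_mult_mat(2,3))
qed

lemma hom_act_smult_ops:
  assumes "X1 \<in> carrier_mat n1 n1" "X2 \<in> carrier_mat n2 n2" "A \<in> carrier_mat n2 n1"
  shows "hom_act (c \<cdot>\<^sub>m X1) (c \<cdot>\<^sub>m X2) A = c \<cdot>\<^sub>m hom_act X1 X2 A"
  unfolding hom_act_def using assms
  by (simp add: mult_smult_assoc_mat[OF assms(2,3)] mult_smult_distrib[OF assms(3,1)])
     (intro eq_matI, auto simp: algebra_simps)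

lemma minus_eq_add:
  fixes A :: "'a::field mat"
  assumes "A \<in> carrier_mat n m" "B \<in> carrier_mat n m" "A - B = C"
  shows "A = B + C"
  using assms by (auto intro!: eq_matI)

section \<open>The raising operator\<close>

abbreviation delta_act :: "int \<Rightarrow> int \<Rightarrow> int \<Rightarrow> int \<Rightarrow> 'a::field mat \<Rightarrow> 'a mat" where
  "delta_act r1 s1 r2 s2 \<equiv> hom_act (delta_mat r1 s1) (delta_mat r2 s2)"

lemma delta_act_linear: "linear_on_mat (dimV r2 s2) (dimV r1 s1) (delta_act r1 s1 r2 s2)"
  by (rule hom_act_linear) auto

lemma delta_act_index:
  assumes "A \<in> carrier_mat (dimV r2 s2) (dimV r1 s1)" "p < dimV r2 s2" "q < dimV r1 s1"
  shows "delta_act r1 s1 r2 s2 A $$ (p,q) =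
    (if p + 1 < dimV r2 s2 then A $$ (p+1,q) else 0) - (if q \<ge> 1 then A $$ (p,q-1) else 0)"
proof -
  have "dim_row (A * delta_mat r1 s1) = dimV r2 s2" "dim_col (A * delta_mat r1 s1) = dimV r1 s1"
    using assms by auto
  then show ?thesis
    unfolding hom_act_def using assms
    by (subst index_minus_mat(1))
       (simp_all add: delta_left[OF assms] delta_right[OF assms] del: index_mult_mat)
qed

text \<open>Each application of delta_act moves the support one diagonal towards the upper right:
  after k steps all entries with p - q > n2 - 1 - k vanish.\<close>
lemma delta_act_iterate_support:
  fixes A :: "'a::field mat"
  assumes A: "A \<in> carrier_mat (dimV r2 s2) (dimV r1 s1)"
    and pq: "p < dimV r2 s2" "q < dimV r1 s1" "int (dimV r2 s2) - 1 - int k < int p - int q"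
  shows "(delta_act r1 s1 r2 s2 ^^ k) A $$ (p,q) = 0"
  using pq
proof (induction k arbitrary: p q)
  case 0
  then show ?case by simp
next
  case (Suc k)
  have "(delta_act r1 s1 r2 s2 ^^ k) A \<in> carrier_mat (dimV r2 s2) (dimV r1 s1)"
    by (rule linear_on_mat_iterate[OF delta_act_linear A])
  then show ?case
    using Suc by (simp add: delta_act_index)
qed

lemma delta_act_nilpotent:
  fixes A :: "'a::field mat"
  assumes A: "A \<in> carrier_mat (dimV r2 s2) (dimV r1 s1)"
  shows "(delta_act r1 s1 r2 s2 ^^ (dimV r1 s1 + dimV r2 s2)) A = 0\<^sub>m (dimV r2 s2) (dimV r1 s1)"
proof -
  have "(delta_act r1 s1 r2 s2 ^^ k) A \<in> carrier_mat (dimV r2 s2) (dimV r1 s1)" for k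
    by (rule linear_on_mat_iterate[OF delta_act_linear A])
  then show ?thesis
    by (intro eq_matI) (auto intro!: delta_act_iterate_support[OF A])
qed

lemma last_nonzero_iterate:
  assumes "(f ^^ N) a = z" "a \<noteq> z"
  shows "\<exists>j. (f ^^ j) a \<noteq> z \<and> f ((f ^^ j) a) = z"
  using assms
proof (induction N)
  case (Suc N)
  show ?case
  proof (cases "(f ^^ N) a = z")
    case True
    then show ?thesis using Suc.IH Suc.prems(2) by blast
  next
    case False
    moreover have "f ((f ^^ N) a) = z" using Suc.prems(1) by simp
    ultimately show ?thesis by blast
  qed
qed simp

lemma delta_highest_vector:
  fixes A :: "'a::field mat"
  assumes S: "S \<subseteq> carrier_mat (dimV r2 s2) (dimV r1 s1)" "\<forall>B\<in>S. delta_act r1 s1 r2 s2 B \<in> S"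
    and A: "A \<in> S" "A \<noteq> 0\<^sub>m (dimV r2 s2) (dimV r1 s1)"
  shows "\<exists>j. (delta_act r1 s1 r2 s2 ^^ j) A \<in> S \<and>
     (delta_act r1 s1 r2 s2 ^^ j) A \<noteq> 0\<^sub>m (dimV r2 s2) (dimV r1 s1) \<and>
     delta_act r1 s1 r2 s2 ((delta_act r1 s1 r2 s2 ^^ j) A) = 0\<^sub>m (dimV r2 s2) (dimV r1 s1)"
proof -
  have "A \<in> carrier_mat (dimV r2 s2) (dimV r1 s1)" using A(1) S(1) by blast
  from last_nonzero_iterate[OF delta_act_nilpotent[OF this] A(2)]
  obtain j where "(delta_act r1 s1 r2 s2 ^^ j) A \<noteq> 0\<^sub>m (dimV r2 s2) (dimV r1 s1)"
    "delta_act r1 s1 r2 s2 ((delta_act r1 s1 r2 s2 ^^ j) A) = 0\<^sub>m (dimV r2 s2) (dimV r1 s1)"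
    by blast
  moreover have "(delta_act r1 s1 r2 s2 ^^ j) A \<in> S" using funpow_closed[OF A(1) S(2)] .
  ultimately show ?thesis by blast
qed

section \<open>Matrices killed by delta\<close>

lemma delta_kernel_diagonal:
  fixes A :: "'a::field mat"
  assumes A: "A \<in> carrier_mat (dimV r2 s2) (dimV r1 s1)"
    and E: "delta_act r1 s1 r2 s2 A = 0\<^sub>m (dimV r2 s2) (dimV r1 s1)"
    and i: "p + i < dimV r2 s2" "q + i < dimV r1 s1"
  shows "A $$ (p + i, q + i) = A $$ (p,q)"
  using i
proof (induction i)
  case (Suc i)
  have "delta_act r1 s1 r2 s2 A $$ (p + i, q + Suc i) = 0" using E Suc.prems by simp
  then have "A $$ (p + Suc i, q + Suc i) = A $$ (p + i, q + i)"
    using Suc.prems by (simp add: delta_act_index[OF A])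
  then show ?case using Suc by simp
qed simp

lemma delta_kernel_support:
  fixes A :: "'a::field mat"
  assumes A: "A \<in> carrier_mat (dimV r2 s2) (dimV r1 s1)"
    and E: "delta_act r1 s1 r2 s2 A = 0\<^sub>m (dimV r2 s2) (dimV r1 s1)"
    and pq: "p < dimV r2 s2" "q < dimV r1 s1" "A $$ (p,q) \<noteq> 0"
  shows "p \<le> q" "int p - int q \<le> int (dimV r2 s2) - int (dimV r1 s1)"
proof -
  let ?n1 = "dimV r1 s1" and ?n2 = "dimV r2 s2"
  have kernel: "delta_act r1 s1 r2 s2 A $$ (a,b) = 0" if "a < ?n2" "b < ?n1" for a b
    using E that by simp
  show "p \<le> q"
  proof (rule ccontr)
    assume "\<not> p \<le> q"
    then obtain a where a: "p - q = Suc a" using not0_implies_Suc by force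
    have "A $$ (p - q + q, 0 + q) = A $$ (p - q, 0)"
      using pq a by (intro delta_kernel_diagonal[OF A E]) auto
    moreover have "Suc a < dimV r2 s2" using a pq by linarith
    then have "A $$ (p - q, 0) = 0"
      using kernel[of a 0] pq a by (simp add: delta_act_index[OF A])
    ultimately show False using pq \<open>\<not> p \<le> q\<close> by simp
  qed
  show "int p - int q \<le> int ?n2 - int ?n1"
  proof (rule ccontr)
    assume far: "\<not> int p - int q \<le> int ?n2 - int ?n1"
    define i where "i = ?n2 - 1 - p"
    have "A $$ (p + i, q + i) = A $$ (p,q)"
      using pq far unfolding i_def by (intro delta_kernel_diagonal[OF A E]) auto
    moreover have "A $$ (?n2 - 1, q + i) = 0"
      using kernel[of "?n2 - 1" "q + i + 1"] pq far unfolding i_def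
      by (simp add: delta_act_index[OF A])
    ultimately show False using pq unfolding i_def by simp
  qed
qed

text \<open>If s2 < s1 or r2 < r1, no nonzero matrix killed by delta has nonnegative degree:
  the allowed diagonals p - q >= r1 - r2 and p - q <= min 0 (n2 - n1) do not meet.\<close>
lemma delta_kernel_nonneg_zero:
  fixes A :: "'a::field mat"
  assumes A: "A \<in> carrier_mat (dimV r2 s2) (dimV r1 s1)"
    and E: "delta_act r1 s1 r2 s2 A = 0\<^sub>m (dimV r2 s2) (dimV r1 s1)"
    and N: "nonneg_degree r1 s1 r2 s2 A" and rs: "r1 \<le> s1" "r2 \<le> s2"
    and lt: "s2 < s1 \<or> r2 < r1"
  shows "A = 0\<^sub>m (dimV r2 s2) (dimV r1 s1)"
proof (rule eq_matI)
  fix p q assume "p < dim_row (0\<^sub>m (dimV r2 s2) (dimV r1 s1) :: 'a mat)"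
    "q < dim_col (0\<^sub>m (dimV r2 s2) (dimV r1 s1) :: 'a mat)"
  then have pq: "p < dimV r2 s2" "q < dimV r1 s1" by auto
  have "A $$ (p,q) = 0"
  proof (rule ccontr)
    assume nz: "A $$ (p,q) \<noteq> 0"
    then have "0 \<le> (r2 + int p) - (r1 + int q)"
      using N pq unfolding nonneg_degree_def by force
    then show False
      using delta_kernel_support[OF A E pq nz] lt dimV_int[OF rs(1)] dimV_int[OF rs(2)] by linarith
  qed
  then show "A $$ (p,q) = 0\<^sub>m (dimV r2 s2) (dimV r1 s1) $$ (p,q)" using pq by simp
qed (use A in auto)

lemma delta_kernel_nonneg_scalar:
  fixes A :: "'a::field mat"
  assumes A: "A \<in> carrier_mat (dimV r s) (dimV r s)"
    and E: "delta_act r s r s A = 0\<^sub>m (dimV r s) (dimV r s)"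
    and N: "nonneg_degree r s r s A"
  shows "A = A $$ (0,0) \<cdot>\<^sub>m 1\<^sub>m (dimV r s)"
proof (rule eq_matI)
  fix p q assume "p < dim_row (A $$ (0,0) \<cdot>\<^sub>m 1\<^sub>m (dimV r s))"
    "q < dim_col (A $$ (0,0) \<cdot>\<^sub>m 1\<^sub>m (dimV r s))"
  then have pq: "p < dimV r s" "q < dimV r s" by auto
  consider "p = q" | "p \<noteq> q" by blast
  then show "A $$ (p,q) = (A $$ (0,0) \<cdot>\<^sub>m 1\<^sub>m (dimV r s)) $$ (p,q)"
  proof cases
    case 1
    then show ?thesis using delta_kernel_diagonal[OF A E, of 0 p 0] pq by simp
  next
    case 2
    have "A $$ (p,q) = 0"
    proof (rule ccontr)
      assume nz: "A $$ (p,q) \<noteq> 0"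
      then have "q \<le> p" using N pq unfolding nonneg_degree_def by force
      then show False using delta_kernel_support(1)[OF A E pq nz] 2 by simp
    qed
    then show ?thesis using pq 2 by simp
  qed
qed (use A in auto)

text \<open>Every matrix in the image of delta_act on End(V) has trace zero (the sum telescopes).\<close>
lemma delta_act_trace:
  fixes A :: "'a::field mat"
  assumes A: "A \<in> carrier_mat (dimV r s) (dimV r s)"
  shows "(\<Sum>p<dimV r s. delta_act r s r s A $$ (p,p)) = 0"
proof -
  let ?n = "dimV r s"
  define g where "g p = (if 1 \<le> p \<and> p < ?n then A $$ (p,p-1) else 0)" for p
  have "(\<Sum>p<?n. delta_act r s r s A $$ (p,p)) = (\<Sum>p<?n. g (Suc p) - g p)"
    by (intro sum.cong) (auto simp: delta_act_index[OF A] g_def)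
  also have "\<dots> = g ?n - g 0" by (rule sum_lessThan_telescope)
  also have "\<dots> = 0" by (simp add: g_def)
  finally show ?thesis .
qed

lemma delta_act_scalar_image:
  fixes A :: "'a::field_char_0 mat"
  assumes rs: "r \<le> s" and A: "A \<in> carrier_mat (dimV r s) (dimV r s)"
    and eq: "delta_act r s r s A = c \<cdot>\<^sub>m 1\<^sub>m (dimV r s)"
  shows "c = 0"
proof -
  have "(\<Sum>p<dimV r s. delta_act r s r s A $$ (p,p)) = of_nat (dimV r s) * c"
    unfolding eq by simp
  then show ?thesis using delta_act_trace[OF A] dimV_pos[OF rs] by simp
qed

section \<open>Graded sl2-triples\<close>

lemma triple_facts:
  assumes "graded_sl2_triple r s H Y"
  shows "H \<in> carrier_mat (dimV r s) (dimV r s)" "Y \<in> carrier_mat (dimV r s) (dimV r s)"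
    "\<And>p q. p < dimV r s \<Longrightarrow> q < dimV r s \<Longrightarrow> p \<noteq> q \<Longrightarrow> H $$ (p, q) = 0"
    "\<And>p q. p < dimV r s \<Longrightarrow> q < dimV r s \<Longrightarrow> p \<noteq> q + 1 \<Longrightarrow> Y $$ (p, q) = 0"
    "H * delta_mat r s - delta_mat r s * H = 2 \<cdot>\<^sub>m delta_mat r s"
    "H * Y - Y * H = (- 2) \<cdot>\<^sub>m Y"
    "delta_mat r s * Y - Y * delta_mat r s = H"
  using assms unfolding graded_sl2_triple_def by blast+

text \<open>[H, delta] = 2 delta forces the diagonal of H to drop by 2 along the basis.\<close>
lemma H_diag:
  fixes H :: "'a::field mat"
  assumes T: "graded_sl2_triple r s H Y" and p: "p < dimV r s"
  shows "H $$ (p,p) = H $$ (0,0) - 2 * of_nat p"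
  using p
proof (induction p)
  case (Suc p)
  note t = triple_facts[OF T]
  have pp: "p < dimV r s" "p + 1 < dimV r s" using Suc by auto
  have "(H * delta_mat r s - delta_mat r s * H) $$ (p, p+1) = 2"
    using t(5) pp by (simp add: delta_index)
  moreover have "(H * delta_mat r s - delta_mat r s * H) $$ (p, p+1)
      = (H * delta_mat r s) $$ (p, p+1) - (delta_mat r s * H) $$ (p, p+1)"
    using t(1) pp by (intro index_minus_mat(1)) auto
  moreover have "(H * delta_mat r s) $$ (p, p+1) = H $$ (p,p)"
    using diag_left[OF t(1) t(3) delta_carrier pp] pp by (simp add: delta_index)
  moreover have "(delta_mat r s * H) $$ (p, p+1) = H $$ (p+1,p+1)"
    using diag_right[OF t(1) t(3) delta_carrier pp] pp by (simp add: delta_index)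
  ultimately have "H $$ (p,p) - H $$ (p+1,p+1) = 2" by simp
  then show ?case using Suc pp by (simp add: algebra_simps)
qed simp

text \<open>Y has degree 1, so its action raises degrees by one and preserves nonnegative degree.\<close>
lemma Y_act_nonneg_degree:
  fixes A :: "'a::field mat"
  assumes T1: "graded_sl2_triple r1 s1 H1 Y1" and T2: "graded_sl2_triple r2 s2 H2 Y2"
    and A: "A \<in> carrier_mat (dimV r2 s2) (dimV r1 s1)" and N: "nonneg_degree r1 s1 r2 s2 A"
  shows "nonneg_degree r1 s1 r2 s2 (hom_act Y1 Y2 A)"
  unfolding nonneg_degree_def
proof (intro allI impI)
  fix p q assume p: "p < dimV r2 s2" and q: "q < dimV r1 s1" and d: "r2 + int p - (r1 + int q) < 0"
  note t1 = triple_facts[OF T1] and t2 = triple_facts[OF T2]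
  have Y2_terms: "Y2 $$ (p,l) * A $$ (l,q) = 0" if "l < dimV r2 s2" for l
  proof (cases "p = l + 1")
    case True
    then have "A $$ (l,q) = 0" using N d that q unfolding nonneg_degree_def by auto
    then show ?thesis by simp
  qed (use t2(4) p that in simp)
  have "(Y2 * A) $$ (p,q) = 0"
    unfolding mult_entry[OF t2(2) A p q] using Y2_terms by (intro sum.neutral) auto
  moreover have Y1_terms: "A $$ (p,l) * Y1 $$ (l,q) = 0" if "l < dimV r1 s1" for l
  proof (cases "l = q + 1")
    case True
    then have "A $$ (p,l) = 0" using N d that p unfolding nonneg_degree_def by auto
    then show ?thesis by simp
  qed (use t1(4) q that in simp)
  have "(A * Y1) $$ (p,q) = 0"
    unfolding mult_entry[OF A t1(2) p q] using Y1_terms by (intro sum.neutral) auto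
  ultimately show "hom_act Y1 Y2 A $$ (p,q) = 0"
    unfolding hom_act_def using p q A t1 t2 by simp
qed

lemma hom_act_sl2_relations:
  fixes H1 Y1 H2 Y2 :: "'a::field mat"
  assumes T1: "graded_sl2_triple r1 s1 H1 Y1" and T2: "graded_sl2_triple r2 s2 H2 Y2"
    and X: "X \<in> carrier_mat (dimV r2 s2) (dimV r1 s1)"
  shows "hom_act H1 H2 (hom_act Y1 Y2 X) = hom_act Y1 Y2 (hom_act H1 H2 X) + (-2) \<cdot>\<^sub>m hom_act Y1 Y2 X"
    and "delta_act r1 s1 r2 s2 (hom_act Y1 Y2 X) = hom_act Y1 Y2 (delta_act r1 s1 r2 s2 X) + hom_act H1 H2 X"
proof -
  note t1 = triple_facts[OF T1] and t2 = triple_facts[OF T2]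
  note lin = hom_act_linear[OF t1(1) t2(1)] hom_act_linear[OF t1(2) t2(2)] delta_act_linear
  note car = linear_on_matD(1)[OF lin(1)] linear_on_matD(1)[OF lin(2)] linear_on_matD(1)[OF lin(3)]
  have "hom_act H1 H2 (hom_act Y1 Y2 X) - hom_act Y1 Y2 (hom_act H1 H2 X)
      = hom_act (H1 * Y1 - Y1 * H1) (H2 * Y2 - Y2 * H2) X"
    by (rule hom_act_comm[OF t1(1) t2(1) t1(2) t2(2) X])
  also have "\<dots> = (-2) \<cdot>\<^sub>m hom_act Y1 Y2 X"
    unfolding t1(6) t2(6) by (rule hom_act_smult_ops[OF t1(2) t2(2) X])
  finally show "hom_act H1 H2 (hom_act Y1 Y2 X) = hom_act Y1 Y2 (hom_act H1 H2 X) + (-2) \<cdot>\<^sub>m hom_act Y1 Y2 X"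
    by (rule minus_eq_add[OF car(1)[OF car(2)[OF X]] car(2)[OF car(1)[OF X]]])
  have "delta_act r1 s1 r2 s2 (hom_act Y1 Y2 X) - hom_act Y1 Y2 (delta_act r1 s1 r2 s2 X)
      = hom_act (delta_mat r1 s1 * Y1 - Y1 * delta_mat r1 s1) (delta_mat r2 s2 * Y2 - Y2 * delta_mat r2 s2) X"
    by (rule hom_act_comm[OF delta_carrier delta_carrier t1(2) t2(2) X])
  also have "\<dots> = hom_act H1 H2 X" unfolding t1(7) t2(7) ..
  finally show "delta_act r1 s1 r2 s2 (hom_act Y1 Y2 X) = hom_act Y1 Y2 (delta_act r1 s1 r2 s2 X) + hom_act H1 H2 X"
    by (rule minus_eq_add[OF car(3)[OF car(2)[OF X]] car(2)[OF car(3)[OF X]]])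
qed

section \<open>Submodules generated by a highest weight vector\<close>

inductive_set iterate_span :: "('a::field mat \<Rightarrow> 'a mat) \<Rightarrow> 'a mat \<Rightarrow> 'a mat set"
  for f and \<psi> where
  iter: "(f ^^ k) \<psi> \<in> iterate_span f \<psi>"
| smult: "\<phi> \<in> iterate_span f \<psi> \<Longrightarrow> c \<cdot>\<^sub>m \<phi> \<in> iterate_span f \<psi>"
| add: "\<phi> \<in> iterate_span f \<psi> \<Longrightarrow> \<phi>' \<in> iterate_span f \<psi> \<Longrightarrow> \<phi> + \<phi>' \<in> iterate_span f \<psi>"

lemma iterate_span_carrier:
  assumes f: "linear_on_mat n m f" and \<psi>: "\<psi> \<in> carrier_mat n m"
    and \<phi>: "\<phi> \<in> iterate_span f \<psi>"
  shows "\<phi> \<in> carrier_mat n m"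
  using \<phi>
proof induction
  case (iter k)
  show ?case by (rule linear_on_mat_iterate[OF f \<psi>])
qed auto

lemma iterate_span_closed:
  assumes f: "linear_on_mat n m f" and g: "linear_on_mat n m g" and \<psi>: "\<psi> \<in> carrier_mat n m"
    and gen: "\<And>k. g ((f ^^ k) \<psi>) \<in> iterate_span f \<psi>"
    and \<phi>: "\<phi> \<in> iterate_span f \<psi>"
  shows "g \<phi> \<in> iterate_span f \<psi>"
  using \<phi>
proof induction
  case (smult \<phi> c)
  then show ?case
    using iterate_span_carrier[OF f \<psi>] linear_on_matD(3)[OF g] iterate_span.smult by metis
next
  case (add \<phi> \<phi>')
  then show ?case
    using iterate_span_carrier[OF f \<psi>] linear_on_matD(2)[OF g] iterate_span.add by metis
qed (rule gen)

lemma sl2_lowering: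
  assumes E: "linear_on_mat n m E" and H: "linear_on_mat n m H" and Y: "linear_on_mat n m Y"
    and HY: "\<And>X. X \<in> carrier_mat n m \<Longrightarrow> H (Y X) = Y (H X) + (-2) \<cdot>\<^sub>m Y X"
    and EY: "\<And>X. X \<in> carrier_mat n m \<Longrightarrow> E (Y X) = Y (E X) + H X"
    and \<psi>: "\<psi> \<in> carrier_mat n m" "E \<psi> = 0\<^sub>m n m" "H \<psi> = \<mu> \<cdot>\<^sub>m \<psi>"
  shows "H ((Y ^^ k) \<psi>) = (\<mu> - 2 * of_nat k) \<cdot>\<^sub>m (Y ^^ k) \<psi>"
    and "\<exists>c. E ((Y ^^ Suc k) \<psi>) = c \<cdot>\<^sub>m (Y ^^ k) \<psi>"
proof -
  have Yk: "(Y ^^ k) \<psi> \<in> carrier_mat n m" for k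
    by (rule linear_on_mat_iterate[OF Y \<psi>(1)])
  have weight: "H ((Y ^^ k) \<psi>) = (\<mu> - 2 * of_nat k) \<cdot>\<^sub>m (Y ^^ k) \<psi>" for k
  proof (induction k)
    case (Suc k)
    have "H ((Y ^^ Suc k) \<psi>) = Y (H ((Y ^^ k) \<psi>)) + (-2) \<cdot>\<^sub>m (Y ^^ Suc k) \<psi>"
      using HY[OF Yk[of k]] by simp
    also have "\<dots> = (\<mu> - 2 * of_nat k) \<cdot>\<^sub>m (Y ^^ Suc k) \<psi> + (-2) \<cdot>\<^sub>m (Y ^^ Suc k) \<psi>"
      using Suc linear_on_matD(3)[OF Y Yk[of k]] by simp
    also have "\<dots> = (\<mu> - 2 * of_nat k + (-2)) \<cdot>\<^sub>m (Y ^^ Suc k) \<psi>"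
      by (rule add_smult_distrib_right_mat[symmetric, OF Yk])
    finally show ?case by (simp add: algebra_simps)
  qed (use \<psi> in simp)
  then show "H ((Y ^^ k) \<psi>) = (\<mu> - 2 * of_nat k) \<cdot>\<^sub>m (Y ^^ k) \<psi>" .
  show "\<exists>c. E ((Y ^^ Suc k) \<psi>) = c \<cdot>\<^sub>m (Y ^^ k) \<psi>"
  proof (induction k)
    case 0
    have "E ((Y ^^ Suc 0) \<psi>) = Y (0\<^sub>m n m) + \<mu> \<cdot>\<^sub>m \<psi>" using EY[OF \<psi>(1)] \<psi> by simp
    also have "\<dots> = \<mu> \<cdot>\<^sub>m \<psi>" using linear_on_mat_zero[OF Y] \<psi>(1) by simp
    finally show ?case by auto
  next
    case (Suc k)
    then obtain c where c: "E ((Y ^^ Suc k) \<psi>) = c \<cdot>\<^sub>m (Y ^^ k) \<psi>" by blast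
    have "E ((Y ^^ Suc (Suc k)) \<psi>) = Y (E ((Y ^^ Suc k) \<psi>)) + H ((Y ^^ Suc k) \<psi>)"
      using EY[OF Yk[of "Suc k"]] by simp
    also have "\<dots> = c \<cdot>\<^sub>m (Y ^^ Suc k) \<psi> + (\<mu> - 2 * of_nat (Suc k)) \<cdot>\<^sub>m (Y ^^ Suc k) \<psi>"
      using c linear_on_matD(3)[OF Y Yk[of k]] weight[of "Suc k"] by simp
    also have "\<dots> = (c + (\<mu> - 2 * of_nat (Suc k))) \<cdot>\<^sub>m (Y ^^ Suc k) \<psi>"
      by (rule add_smult_distrib_right_mat[symmetric, OF Yk])
    finally show ?case by blast
  qed
qed

lemma highest_weight_span_stable:
  assumes E: "linear_on_mat n m E" and H: "linear_on_mat n m H" and Y: "linear_on_mat n m Y"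
    and HY: "\<And>X. X \<in> carrier_mat n m \<Longrightarrow> H (Y X) = Y (H X) + (-2) \<cdot>\<^sub>m Y X"
    and EY: "\<And>X. X \<in> carrier_mat n m \<Longrightarrow> E (Y X) = Y (E X) + H X"
    and \<psi>: "\<psi> \<in> carrier_mat n m" "E \<psi> = 0\<^sub>m n m" "H \<psi> = \<mu> \<cdot>\<^sub>m \<psi>"
    and \<phi>: "\<phi> \<in> iterate_span Y \<psi>"
  shows "E \<phi> \<in> iterate_span Y \<psi>" "H \<phi> \<in> iterate_span Y \<psi>" "Y \<phi> \<in> iterate_span Y \<psi>"
proof -
  note lowering = sl2_lowering[OF E H Y HY EY \<psi>]
  have "E ((Y ^^ k) \<psi>) \<in> iterate_span Y \<psi>" for k
  proof (cases k)
    case 0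
    have "E \<psi> = 0 \<cdot>\<^sub>m \<psi>" using \<psi> by (intro eq_matI) auto
    then show ?thesis using 0 iterate_span.smult[OF iterate_span.iter[where k=0]] by simp
  next
    case (Suc j)
    then obtain c where "E ((Y ^^ k) \<psi>) = c \<cdot>\<^sub>m (Y ^^ j) \<psi>" using lowering(2) by blast
    then show ?thesis using iterate_span.smult[OF iterate_span.iter] by metis
  qed
  then show "E \<phi> \<in> iterate_span Y \<psi>" by (rule iterate_span_closed[OF Y E \<psi>(1) _ \<phi>])
  show "H \<phi> \<in> iterate_span Y \<psi>"
    using iterate_span_closed[OF Y H \<psi>(1) _ \<phi>] lowering(1) iterate_span.smult[OF iterate_span.iter]
    by metis
  have "Y ((Y ^^ k) \<psi>) \<in> iterate_span Y \<psi>" for k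
    using iterate_span.iter[where f=Y and k="Suc k" and \<psi>=\<psi>] by simp
  then show "Y \<phi> \<in> iterate_span Y \<psi>" by (rule iterate_span_closed[OF Y Y \<psi>(1) _ \<phi>])
qed

section \<open>A highest weight vector of nonnegative degree\<close>

definition diag_ones :: "nat \<Rightarrow> nat \<Rightarrow> int \<Rightarrow> 'a::field mat" where
  "diag_ones n m d = mat n m (\<lambda>(p, q). if int p - int q = d then 1 else 0)"

lemma diag_ones_carrier: "diag_ones n m d \<in> carrier_mat n m"
  by (simp add: diag_ones_def)

lemma diag_ones_index: "p < n \<Longrightarrow> q < m \<Longrightarrow> diag_ones n m d $$ (p,q) = (if int p - int q = d then 1 else 0)"
  by (simp add: diag_ones_def)

lemma diag_ones_nonzero:
  assumes "0 < n" "0 < m" "-int m < d" "d < int n"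
  shows "diag_ones n m d \<noteq> (0\<^sub>m n m :: 'a::field mat)"
proof (cases "0 \<le> d")
  case True
  then have "nat d < n" "0 < m" using assms by auto
  then have "diag_ones n m d $$ (nat d, 0) = (1::'a)" using True by (simp add: diag_ones_index)
  then show ?thesis using assms True by auto
next
  case False
  then have "0 < n" "nat (-d) < m" using assms by auto
  then have "diag_ones n m d $$ (0, nat (-d)) = (1::'a)" using False by (simp add: diag_ones_index)
  then show ?thesis using assms False by auto
qed

text \<open>The entries of diag_ones n2 n1 d all have degree r2 - r1 + d.\<close>
lemma diag_ones_nonneg_degree:
  assumes "0 \<le> r2 - r1 + d"
  shows "nonneg_degree r1 s1 r2 s2 (diag_ones (dimV r2 s2) (dimV r1 s1) d)"
  using assms unfolding nonneg_degree_def by (auto simp: diag_ones_index)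

text \<open>The lowest diagonal allowed for matrices killed by delta carries a highest weight vector.\<close>
lemma diag_ones_delta_kernel:
  assumes d: "d = min 0 (int (dimV r2 s2) - int (dimV r1 s1))"
  shows "delta_act r1 s1 r2 s2 (diag_ones (dimV r2 s2) (dimV r1 s1) d) = 0\<^sub>m (dimV r2 s2) (dimV r1 s1)"
proof -
  have "delta_act r1 s1 r2 s2 (diag_ones (dimV r2 s2) (dimV r1 s1) d) \<in> carrier_mat (dimV r2 s2) (dimV r1 s1)"
    by (rule linear_on_matD(1)[OF delta_act_linear diag_ones_carrier])
  then show ?thesis
    unfolding d by (intro eq_matI) (auto simp: delta_act_index[OF diag_ones_carrier] diag_ones_index)
qed

text \<open>Since H is diagonal with H(p,p) = H(0,0) - 2p, every diag_ones is an H-weight vector.\<close>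
lemma diag_ones_weight:
  fixes H1 Y1 H2 Y2 :: "'a::field mat"
  assumes T1: "graded_sl2_triple r1 s1 H1 Y1" and T2: "graded_sl2_triple r2 s2 H2 Y2"
  shows "hom_act H1 H2 (diag_ones (dimV r2 s2) (dimV r1 s1) d)
      = (H2 $$ (0,0) - H1 $$ (0,0) - 2 * of_int d) \<cdot>\<^sub>m diag_ones (dimV r2 s2) (dimV r1 s1) d"
    (is "hom_act H1 H2 ?\<psi> = ?\<mu> \<cdot>\<^sub>m ?\<psi>")
proof -
  note t1 = triple_facts[OF T1] and t2 = triple_facts[OF T2]
  have \<psi>: "?\<psi> \<in> carrier_mat (dimV r2 s2) (dimV r1 s1)" by (rule diag_ones_carrier)
  have H\<psi>: "hom_act H1 H2 ?\<psi> \<in> carrier_mat (dimV r2 s2) (dimV r1 s1)"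
    by (rule linear_on_matD(1)[OF hom_act_linear[OF t1(1) t2(1)] \<psi>])
  show ?thesis
  proof (rule eq_matI)
    fix p q assume "p < dim_row (?\<mu> \<cdot>\<^sub>m ?\<psi>)" "q < dim_col (?\<mu> \<cdot>\<^sub>m ?\<psi>)"
    then have pq: "p < dimV r2 s2" "q < dimV r1 s1" using \<psi> by auto
    have "hom_act H1 H2 ?\<psi> $$ (p,q) = (H2 * ?\<psi>) $$ (p,q) - (?\<psi> * H1) $$ (p,q)"
      unfolding hom_act_def using pq \<psi> t1(1) by (intro index_minus_mat(1)) auto
    also have "\<dots> = (H2 $$ (p,p) - H1 $$ (q,q)) * ?\<psi> $$ (p,q)"
      using diag_left[OF t2(1) t2(3) \<psi> pq] diag_right[OF t1(1) t1(3) \<psi> pq]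
      by (simp add: algebra_simps)
    also have "\<dots> = ?\<mu> * ?\<psi> $$ (p,q)"
    proof (cases "int p - int q = d")
      case True
      then have d_eq: "(of_int d :: 'a) = of_nat p - of_nat q" by auto
      have "H2 $$ (p,p) - H1 $$ (q,q) = H2 $$ (0,0) - H1 $$ (0,0) - 2 * (of_nat p - of_nat q)"
        unfolding H_diag[OF T2 pq(1)] H_diag[OF T1 pq(2)] by (simp add: algebra_simps)
      also have "\<dots> = ?\<mu>" by (simp only: d_eq)
      finally show ?thesis by simp
    qed (simp add: diag_ones_index pq)
    finally show "hom_act H1 H2 ?\<psi> $$ (p,q) = (?\<mu> \<cdot>\<^sub>m ?\<psi>) $$ (p,q)" using pq \<psi> by simp
  qed (use \<psi> H\<psi> in auto)
qed

lemma iterate_span_nonneg_degree: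
  fixes H1 Y1 H2 Y2 :: "'a::field mat"
  assumes T1: "graded_sl2_triple r1 s1 H1 Y1" and T2: "graded_sl2_triple r2 s2 H2 Y2"
    and \<psi>: "\<psi> \<in> carrier_mat (dimV r2 s2) (dimV r1 s1)" "nonneg_degree r1 s1 r2 s2 \<psi>"
    and \<phi>: "\<phi> \<in> iterate_span (hom_act Y1 Y2) \<psi>"
  shows "nonneg_degree r1 s1 r2 s2 \<phi>"
proof -
  note Y = hom_act_linear[OF triple_facts(2)[OF T1] triple_facts(2)[OF T2]]
  have carrier: "\<phi> \<in> carrier_mat (dimV r2 s2) (dimV r1 s1)" if "\<phi> \<in> iterate_span (hom_act Y1 Y2) \<psi>" for \<phi>
    using iterate_span_carrier[OF Y \<psi>(1) that] .
  show ?thesis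
    using \<phi>
  proof induction
    case (iter k)
    show ?case
    proof (induction k)
      case (Suc k)
      then show ?case
        using Y_act_nonneg_degree[OF T1 T2] carrier[OF iterate_span.iter] by simp
    qed (use \<psi> in simp)
  next
    case (smult \<phi> c)
    then show ?case using carrier[OF smult(1)] unfolding nonneg_degree_def by auto
  next
    case (add \<phi> \<phi>')
    then show ?case using carrier[OF add(1)] carrier[OF add(2)] unfolding nonneg_degree_def by auto
  qed
qed

section \<open>The maximal submodule of nonnegative degree\<close>

text \<open>The only part of the submodule structure needed for upper bounds: stability under delta.\<close>
lemma submodule_delta_stable:
  assumes "hom_sl2_submodule r1 s1 H1 Y1 r2 s2 H2 Y2 S"
  shows "S \<subseteq> carrier_mat (dimV r2 s2) (dimV r1 s1)" "\<forall>B\<in>S. delta_act r1 s1 r2 s2 B \<in> S"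
  using assms unfolding hom_sl2_submodule_def by blast+

lemma zero_in_n_max:
  fixes H1 Y1 H2 Y2 :: "'a::field mat"
  assumes T1: "graded_sl2_triple r1 s1 H1 Y1" and T2: "graded_sl2_triple r2 s2 H2 Y2"
  shows "0\<^sub>m (dimV r2 s2) (dimV r1 s1) \<in> n_max r1 s1 H1 Y1 r2 s2 H2 Y2"
proof -
  note t1 = triple_facts[OF T1] and t2 = triple_facts[OF T2]
  have "hom_sl2_submodule r1 s1 H1 Y1 r2 s2 H2 Y2 {0\<^sub>m (dimV r2 s2) (dimV r1 s1)}"
    unfolding hom_sl2_submodule_def
    using linear_on_mat_zero[OF delta_act_linear] linear_on_mat_zero[OF hom_act_linear[OF t1(1) t2(1)]]
      linear_on_mat_zero[OF hom_act_linear[OF t1(2) t2(2)]]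
    by auto
  moreover have "nonneg_degree r1 s1 r2 s2 (0\<^sub>m (dimV r2 s2) (dimV r1 s1) :: 'a mat)"
    unfolding nonneg_degree_def by auto
  ultimately show ?thesis unfolding n_max_def by blast
qed

text \<open>If s2 < s1 or r2 < r1 then n(V1, V2) = 0: a nonzero element would generate a nonzero
  highest weight vector of nonnegative degree.\<close>
lemma n_max_trivial:
  fixes H1 Y1 H2 Y2 :: "'a::field mat"
  assumes rs: "r1 \<le> s1" "r2 \<le> s2"
    and T1: "graded_sl2_triple r1 s1 H1 Y1" and T2: "graded_sl2_triple r2 s2 H2 Y2"
    and lt: "s2 < s1 \<or> r2 < r1"
  shows "n_max r1 s1 H1 Y1 r2 s2 H2 Y2 = {0\<^sub>m (dimV r2 s2) (dimV r1 s1)}"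
proof
  show "{0\<^sub>m (dimV r2 s2) (dimV r1 s1)} \<subseteq> n_max r1 s1 H1 Y1 r2 s2 H2 Y2"
    using zero_in_n_max[OF T1 T2] by blast
  show "n_max r1 s1 H1 Y1 r2 s2 H2 Y2 \<subseteq> {0\<^sub>m (dimV r2 s2) (dimV r1 s1)}"
  proof
    fix \<phi> assume "\<phi> \<in> n_max r1 s1 H1 Y1 r2 s2 H2 Y2"
    then obtain S where S: "hom_sl2_submodule r1 s1 H1 Y1 r2 s2 H2 Y2 S"
      "\<forall>\<phi>\<in>S. nonneg_degree r1 s1 r2 s2 \<phi>" "\<phi> \<in> S"
      unfolding n_max_def by blast
    note stable = submodule_delta_stable[OF S(1)]
    show "\<phi> \<in> {0\<^sub>m (dimV r2 s2) (dimV r1 s1)}"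
    proof (rule ccontr)
      assume "\<phi> \<notin> {0\<^sub>m (dimV r2 s2) (dimV r1 s1)}"
      then obtain j where \<chi>: "(delta_act r1 s1 r2 s2 ^^ j) \<phi> \<in> S"
        "(delta_act r1 s1 r2 s2 ^^ j) \<phi> \<noteq> 0\<^sub>m (dimV r2 s2) (dimV r1 s1)"
        "delta_act r1 s1 r2 s2 ((delta_act r1 s1 r2 s2 ^^ j) \<phi>) = 0\<^sub>m (dimV r2 s2) (dimV r1 s1)"
        using delta_highest_vector[OF stable S(3)] by blast
      have "(delta_act r1 s1 r2 s2 ^^ j) \<phi> = 0\<^sub>m (dimV r2 s2) (dimV r1 s1)"
        using delta_kernel_nonneg_zero[OF _ \<chi>(3) _ rs lt] \<chi>(1) stable(1) S(2) by blast
      then show False using \<chi>(2) by simp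
    qed
  qed
qed

text \<open>If s1 <= s2 and r1 <= r2 then n(V1, V2) contains the highest weight vector
  diag_ones n2 n1 (min 0 (n2 - n1)), which has degree min (r2 - r1) (s2 - s1) >= 0.\<close>
lemma n_max_nontrivial:
  fixes H1 Y1 H2 Y2 :: "'a::field mat"
  assumes rs: "r1 \<le> s1" "r2 \<le> s2"
    and T1: "graded_sl2_triple r1 s1 H1 Y1" and T2: "graded_sl2_triple r2 s2 H2 Y2"
    and le: "s1 \<le> s2" "r1 \<le> r2"
  shows "\<exists>\<psi> \<in> n_max r1 s1 H1 Y1 r2 s2 H2 Y2. \<psi> \<noteq> 0\<^sub>m (dimV r2 s2) (dimV r1 s1)"
proof -
  note t1 = triple_facts[OF T1] and t2 = triple_facts[OF T2]
  define d where "d = min 0 (int (dimV r2 s2) - int (dimV r1 s1))"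
  define \<psi> :: "'a mat" where "\<psi> = diag_ones (dimV r2 s2) (dimV r1 s1) d"
  define \<mu> :: 'a where "\<mu> = H2 $$ (0,0) - H1 $$ (0,0) - 2 * of_int d"
  define S where "S = iterate_span (hom_act Y1 Y2) \<psi>"
  note E = delta_act_linear[of r2 s2 r1 s1]
  note H = hom_act_linear[OF t1(1) t2(1)] and Y = hom_act_linear[OF t1(2) t2(2)]
  have \<psi>: "\<psi> \<in> carrier_mat (dimV r2 s2) (dimV r1 s1)" "delta_act r1 s1 r2 s2 \<psi> = 0\<^sub>m (dimV r2 s2) (dimV r1 s1)"
    "hom_act H1 H2 \<psi> = \<mu> \<cdot>\<^sub>m \<psi>"
    unfolding \<psi>_def \<mu>_def
    by (auto simp: diag_ones_carrier diag_ones_delta_kernel[OF d_def] diag_ones_weight[OF T1 T2])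
  note stable = highest_weight_span_stable[OF E H Y hom_act_sl2_relations[OF T1 T2] \<psi>, folded S_def]
  have degree: "0 \<le> r2 - r1 + d"
    using dimV_int[OF rs(1)] dimV_int[OF rs(2)] le unfolding d_def by linarith
  have sub: "hom_sl2_submodule r1 s1 H1 Y1 r2 s2 H2 Y2 S"
    unfolding hom_sl2_submodule_def
  proof (intro conjI ballI allI subsetI)
    show "\<phi> \<in> carrier_mat (dimV r2 s2) (dimV r1 s1)" if "\<phi> \<in> S" for \<phi>
      using iterate_span_carrier[OF Y \<psi>(1)] that unfolding S_def .
    have "0\<^sub>m (dimV r2 s2) (dimV r1 s1) = 0 \<cdot>\<^sub>m \<psi>" using \<psi>(1) by (intro eq_matI) auto
    then show "0\<^sub>m (dimV r2 s2) (dimV r1 s1) \<in> S"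
      using iterate_span.smult[OF iterate_span.iter[where f="hom_act Y1 Y2" and k=0 and \<psi>=\<psi>], of 0]
      unfolding S_def by simp
  qed (use stable iterate_span.smult iterate_span.add in \<open>auto simp: S_def\<close>)
  have "\<forall>\<phi>\<in>S. nonneg_degree r1 s1 r2 s2 \<phi>"
    using iterate_span_nonneg_degree[OF T1 T2 \<psi>(1)] diag_ones_nonneg_degree[OF degree]
    unfolding S_def \<psi>_def by blast
  moreover have "\<psi> \<in> S" using iterate_span.iter[where k=0] unfolding S_def by simp
  ultimately have "\<psi> \<in> n_max r1 s1 H1 Y1 r2 s2 H2 Y2" using sub unfolding n_max_def by blast
  moreover have "\<psi> \<noteq> 0\<^sub>m (dimV r2 s2) (dimV r1 s1)"
    unfolding \<psi>_def using dimV_pos[OF rs(1)] dimV_pos[OF rs(2)]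
    by (intro diag_ones_nonzero) (auto simp: d_def)
  ultimately show ?thesis by blast
qed

lemma scalars_in_n_max:
  fixes H Y :: "'a::field mat"
  assumes T: "graded_sl2_triple r s H Y"
  shows "{c \<cdot>\<^sub>m 1\<^sub>m (dimV r s) | c. True} \<subseteq> n_max r s H Y r s H Y"
proof -
  let ?n = "dimV r s" and ?S = "{c \<cdot>\<^sub>m 1\<^sub>m (dimV r s) | c. True} :: 'a mat set"
  note t = triple_facts[OF T]
  have act: "hom_act X X (c \<cdot>\<^sub>m 1\<^sub>m ?n) = 0 \<cdot>\<^sub>m 1\<^sub>m ?n" if X: "X \<in> carrier_mat ?n ?n" for X c
  proof -
    have "X * (c \<cdot>\<^sub>m 1\<^sub>m ?n) = c \<cdot>\<^sub>m X" using mult_smult_distrib[OF X, of "1\<^sub>m ?n" ?n c] X by simp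
    moreover have "(c \<cdot>\<^sub>m 1\<^sub>m ?n) * X = c \<cdot>\<^sub>m X" using mult_smult_assoc_mat[of "1\<^sub>m ?n" ?n ?n X ?n c] X by simp
    ultimately show ?thesis unfolding hom_act_def using X by (intro eq_matI) auto
  qed
  have "hom_sl2_submodule r s H Y r s H Y ?S"
    unfolding hom_sl2_submodule_def
  proof (intro conjI ballI allI)
    show "?S \<subseteq> carrier_mat ?n ?n" by auto
    have "0\<^sub>m ?n ?n = (0::'a) \<cdot>\<^sub>m 1\<^sub>m ?n" by (intro eq_matI) auto
    then show "0\<^sub>m ?n ?n \<in> ?S" by blast
  next
    fix \<phi> \<psi> assume "\<phi> \<in> ?S" "\<psi> \<in> ?S"
    then obtain a b where "\<phi> = a \<cdot>\<^sub>m 1\<^sub>m ?n" "\<psi> = b \<cdot>\<^sub>m 1\<^sub>m ?n" by blast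
    then have "\<phi> + \<psi> = (a + b) \<cdot>\<^sub>m 1\<^sub>m ?n" by (intro eq_matI) (auto simp: algebra_simps)
    then show "\<phi> + \<psi> \<in> ?S" by blast
  next
    fix c \<phi> assume "\<phi> \<in> ?S"
    then obtain a where "\<phi> = a \<cdot>\<^sub>m 1\<^sub>m ?n" by blast
    then have "c \<cdot>\<^sub>m \<phi> = (c * a) \<cdot>\<^sub>m 1\<^sub>m ?n" by (intro eq_matI) auto
    then show "c \<cdot>\<^sub>m \<phi> \<in> ?S" by blast
  next
    fix \<phi> assume "\<phi> \<in> ?S"
    then obtain a where a: "\<phi> = a \<cdot>\<^sub>m 1\<^sub>m ?n" by blast
    show "hom_act (delta_mat r s) (delta_mat r s) \<phi> \<in> ?S" unfolding a act[OF delta_carrier] by blast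
    show "hom_act H H \<phi> \<in> ?S" unfolding a act[OF t(1)] by blast
    show "hom_act Y Y \<phi> \<in> ?S" unfolding a act[OF t(2)] by blast
  qed
  moreover have "\<forall>\<phi>\<in>?S. nonneg_degree r s r s \<phi>" unfolding nonneg_degree_def by auto
  ultimately show ?thesis unfolding n_max_def by blast
qed

text \<open>n(V, V) consists of scalars: every element is killed by delta (otherwise the E-chain
  through it ends in a nonzero scalar in the image of delta), hence is scalar.\<close>
lemma n_max_diagonal:
  fixes H Y :: "'a::field_char_0 mat"
  assumes rs: "r \<le> s" and T: "graded_sl2_triple r s H Y"
  shows "n_max r s H Y r s H Y = {c \<cdot>\<^sub>m 1\<^sub>m (dimV r s) | c. True}"
proof
  let ?n = "dimV r s" and ?E = "delta_act r s r s :: 'a mat \<Rightarrow> 'a mat"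
  show "{c \<cdot>\<^sub>m 1\<^sub>m ?n | c. True} \<subseteq> n_max r s H Y r s H Y" by (rule scalars_in_n_max[OF T])
  show "n_max r s H Y r s H Y \<subseteq> {c \<cdot>\<^sub>m 1\<^sub>m ?n | c. True}"
  proof
    fix \<phi> assume "\<phi> \<in> n_max r s H Y r s H Y"
    then obtain S where S: "hom_sl2_submodule r s H Y r s H Y S"
      "\<forall>\<phi>\<in>S. nonneg_degree r s r s \<phi>" "\<phi> \<in> S"
      unfolding n_max_def by blast
    note stable = submodule_delta_stable[OF S(1)]
    have kernel: "?E \<phi> = 0\<^sub>m ?n ?n"
    proof (rule ccontr)
      assume nz: "?E \<phi> \<noteq> 0\<^sub>m ?n ?n"
      have "?E \<phi> \<in> S" using stable(2) S(3) by blast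
      then obtain j where \<chi>: "(?E ^^ j) (?E \<phi>) \<in> S" "(?E ^^ j) (?E \<phi>) \<noteq> 0\<^sub>m ?n ?n"
        "?E ((?E ^^ j) (?E \<phi>)) = 0\<^sub>m ?n ?n"
        using delta_highest_vector[OF stable _ nz] by blast
      define \<chi> where "\<chi> = (?E ^^ j) (?E \<phi>)"
      have scalar: "\<chi> = \<chi> $$ (0,0) \<cdot>\<^sub>m 1\<^sub>m ?n"
        using delta_kernel_nonneg_scalar[OF _ \<chi>(3)] \<chi>(1) stable(1) S(2) unfolding \<chi>_def by blast
      have "(?E ^^ j) \<phi> \<in> carrier_mat ?n ?n"
        using funpow_closed[OF S(3) stable(2)] stable(1) by blast
      moreover have "?E ((?E ^^ j) \<phi>) = \<chi> $$ (0,0) \<cdot>\<^sub>m 1\<^sub>m ?n"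
        using scalar unfolding \<chi>_def by (simp add: funpow_swap1)
      ultimately have "\<chi> $$ (0,0) = 0" by (rule delta_act_scalar_image[OF rs])
      then have "\<chi> = 0\<^sub>m ?n ?n" using scalar by (auto intro!: eq_matI)
      then show False using \<chi>(2) unfolding \<chi>_def by simp
    qed
    have "\<phi> = \<phi> $$ (0,0) \<cdot>\<^sub>m 1\<^sub>m ?n"
      using delta_kernel_nonneg_scalar[OF _ kernel] S(2,3) stable(1) by blast
    then show "\<phi> \<in> {c \<cdot>\<^sub>m 1\<^sub>m ?n | c. True}" by blast
  qed
qed

theorem mainTheorem13:
  fixes r1 s1 r2 s2 r s :: int
    and H1 Y1 H2 Y2 H Y :: "'a::field_char_0 mat"
  assumes "r1 \<le> s1" "s1 < 0" "r2 \<le> s2" "s2 < 0" "r \<le> s" "s < 0"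
    and "graded_sl2_triple r1 s1 H1 Y1"
    and "graded_sl2_triple r2 s2 H2 Y2"
    and "graded_sl2_triple r s H Y"
  shows "(n_max r1 s1 H1 Y1 r2 s2 H2 Y2 = {0\<^sub>m (dimV r2 s2) (dimV r1 s1)}
            \<longleftrightarrow> s2 < s1 \<or> r2 < r1)
         \<and> n_max r s H Y r s H Y = {c \<cdot>\<^sub>m 1\<^sub>m (dimV r s) | c. True}"
proof (intro conjI iffI)
  assume trivial: "n_max r1 s1 H1 Y1 r2 s2 H2 Y2 = {0\<^sub>m (dimV r2 s2) (dimV r1 s1)}"
  show "s2 < s1 \<or> r2 < r1"
  proof (rule ccontr)
    assume "\<not> (s2 < s1 \<or> r2 < r1)"
    then have "s1 \<le> s2" "r1 \<le> r2" by auto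
    then show False using n_max_nontrivial[OF assms(1,3,7,8)] trivial by blast
  qed
next
  assume "s2 < s1 \<or> r2 < r1"
  then show "n_max r1 s1 H1 Y1 r2 s2 H2 Y2 = {0\<^sub>m (dimV r2 s2) (dimV r1 s1)}"
    by (rule n_max_trivial[OF assms(1,3,7,8)])
next
  show "n_max r s H Y r s H Y = {c \<cdot>\<^sub>m 1\<^sub>m (dimV r s) | c. True}"
    by (rule n_max_diagonal[OF assms(5,9)])
qed

end
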